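(* Let $(d_1,\ldots,d_n)$ be a tree degree sequence with $n\geq 3$, let $V=\{v_1,\ldots,v_n\}$, and let $X\subseteq V$ be such that (i) $d_i>1$ for every $v_i\in X$, (ii) $|X|\leq n/2$, and (iii) $\sum_{i:v_i\in X}d_i\geq \sum_{i:v_i\in V\setminus X}d_i$. Then there is a tree $T$ with vertex set $V$ such that $d_T(v_i)=d_i$ for every $v_i\in V$ and $X$ is a minimum vertex cover of $T$.
   Context: All graphs are finite, simple and undirected. The degree sequence of a graph is the nonincreasing sequence of its vertex degrees (so $d_1\geq\cdots\geq d_n$). A tree degree sequence is the degree sequence of some tree. $d_T(v)$ denotes the degree of $v$ in $T$. *)

theory Defs
  imports Main
begin

definition simple_graph :: "'a set \<Rightarrow> 'a set set \<Rightarrow> bool" where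
  "simple_graph V E \<longleftrightarrow> finite V \<and> (\<forall>e\<in>E. e \<subseteq> V \<and> card e = 2)"

definition adj :: "'a set set \<Rightarrow> 'a \<Rightarrow> 'a \<Rightarrow> bool" where
  "adj E u v \<longleftrightarrow> {u, v} \<in> E"

definition degree :: "'a set set \<Rightarrow> 'a \<Rightarrow> nat" where
  "degree E v = card {e \<in> E. v \<in> e}"

definition connected_graph :: "'a set \<Rightarrow> 'a set set \<Rightarrow> bool" where
  "connected_graph V E \<longleftrightarrow> (\<forall>u\<in>V. \<forall>v\<in>V. (u, v) \<in> {(x, y). adj E x y}\<^sup>*)"

definition is_cycle :: "'a set set \<Rightarrow> 'a list \<Rightarrow> bool" where
  "is_cycle E xs \<longleftrightarrow> length xs \<ge> 3 \<and> distinct xs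
     \<and> (\<forall>i. Suc i < length xs \<longrightarrow> adj E (xs ! i) (xs ! Suc i))
     \<and> adj E (last xs) (hd xs)"

definition acyclic_graph :: "'a set set \<Rightarrow> bool" where
  "acyclic_graph E \<longleftrightarrow> \<not> (\<exists>xs. is_cycle E xs)"

definition is_tree :: "'a set \<Rightarrow> 'a set set \<Rightarrow> bool" where
  "is_tree V E \<longleftrightarrow> simple_graph V E \<and> V \<noteq> {} \<and> connected_graph V E \<and> acyclic_graph E"

definition vertex_cover :: "'a set \<Rightarrow> 'a set set \<Rightarrow> 'a set \<Rightarrow> bool" where
  "vertex_cover V E X \<longleftrightarrow> X \<subseteq> V \<and> (\<forall>e\<in>E. e \<inter> X \<noteq> {})"

definition min_vertex_cover :: "'a set \<Rightarrow> 'a set set \<Rightarrow> 'a set \<Rightarrow> bool" where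
  "min_vertex_cover V E X \<longleftrightarrow> vertex_cover V E X \<and> (\<forall>Y. vertex_cover V E Y \<longrightarrow> card X \<le> card Y)"

text \<open>(d_1,...,d_n) (as d :: nat => nat on indices 1..n) is a tree degree sequence:
  nonincreasing and the degree sequence of some tree; vertices v_i are identified with i.\<close>
definition tree_degree_seq :: "nat \<Rightarrow> (nat \<Rightarrow> nat) \<Rightarrow> bool" where
  "tree_degree_seq n d \<longleftrightarrow> (\<forall>i j. 1 \<le> i \<and> i \<le> j \<and> j \<le> n \<longrightarrow> d j \<le> d i)
     \<and> (\<exists>E. is_tree {1..n} E \<and> (\<forall>i\<in>{1..n}. degree E i = d i))"

end

theory Submission
  imports Defs
begin

text \<open>If every x in a vertex cover X of a tree is joined to a vertex f x outside X, with f
  injective, then X is a minimum vertex cover: any cover contains an end of each of the pairwise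
  disjoint edges {x, f x}. The degree sum 2n - 2 forces a vertex y outside X of degree 1. Either y is deleted and
  the degree of some x in X is lowered by one (possible when d x \<ge> 3 or n = 3, and X is smaller
  than its complement), or some x in X has degree 2, the pendant path x - y is deleted, the degree of
  a future neighbour w of x is lowered by one, and x is later matched to y. Counting degrees shows
  that one of the two reductions always preserves the hypotheses.\<close>

lemma simple_graph_finite_edges: "simple_graph V E \<Longrightarrow> finite E"
  unfolding simple_graph_def by (meson Pow_iff finite_Pow_iff finite_subset subsetI)

lemma is_tree_finite_edges: "is_tree V E \<Longrightarrow> finite E"
  using simple_graph_finite_edges by (auto simp: is_tree_def)

lemma is_tree_edge_subset: "is_tree V E \<Longrightarrow> e \<in> E \<Longrightarrow> e \<subseteq> V"
  by (auto simp: is_tree_def simple_graph_def)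

lemma is_tree_degree_outside: "is_tree V E \<Longrightarrow> v \<notin> V \<Longrightarrow> degree E v = 0"
proof -
  assume "is_tree V E" "v \<notin> V"
  then have "{e \<in> E. v \<in> e} = {}" using is_tree_edge_subset by blast
  then show "degree E v = 0" unfolding degree_def by (metis card.empty)
qed

lemma degree_insert_edge:
  assumes "finite E" "e \<notin> E"
  shows "degree (insert e E) v = degree E v + (if v \<in> e then 1 else 0)"
proof -
  have "{f \<in> insert e E. v \<in> f} = (if v \<in> e then insert e {f \<in> E. v \<in> f} else {f \<in> E. v \<in> f})"
    by auto
  then show ?thesis using assms by (simp add: degree_def)
qed

lemma is_cycle_mono: "is_cycle E xs \<Longrightarrow> E \<subseteq> E' \<Longrightarrow> is_cycle E' xs"
  unfolding is_cycle_def adj_def by blast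

lemma is_cycle_two_neighbours:
  assumes C: "is_cycle E xs" and v: "v \<in> set xs"
  obtains a b where "a \<noteq> b" "adj E v a" "adj E v b"
proof -
  let ?L = "length xs"
  have L: "3 \<le> ?L" and dist: "distinct xs"
    and step: "\<And>i. Suc i < ?L \<Longrightarrow> adj E (xs ! i) (xs ! Suc i)"
    using C by (auto simp: is_cycle_def)
  have "xs \<noteq> []" using L by auto
  then have wrap: "adj E (xs ! (?L - 1)) (xs ! 0)"
    using C by (simp add: is_cycle_def last_conv_nth hd_conv_nth)
  obtain i where i: "i < ?L" "xs ! i = v" using v by (auto simp: in_set_conv_nth)
  define s where "s = (if i = ?L - 1 then 0 else Suc i)"
  define p where "p = (if i = 0 then ?L - 1 else i - 1)"
  have "s < ?L" "p < ?L" "s \<noteq> p" using i L by (auto simp: s_def p_def)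
  then have "xs ! s \<noteq> xs ! p" using dist by (simp add: nth_eq_iff_index_eq)
  moreover have "adj E v (xs ! s)" using i step wrap by (auto simp: s_def)
  moreover have "adj E (xs ! p) v" using i step[of "i - 1"] wrap by (auto simp: p_def)
  ultimately show thesis using that by (auto simp: adj_def insert_commute)
qed

lemma acyclic_add_leaf:
  assumes ac: "acyclic_graph E" and fresh: "\<forall>e\<in>E. v \<notin> e" and uv: "u \<noteq> v"
  shows "acyclic_graph (insert {u, v} E)"
  unfolding acyclic_graph_def
proof
  assume "\<exists>xs. is_cycle (insert {u, v} E) xs"
  then obtain xs where C: "is_cycle (insert {u, v} E) xs" by blast
  show False
  proof (cases "v \<in> set xs")
    case True
    have "a = u" if "adj (insert {u, v} E) v a" for a
      using that fresh uv by (auto simp: adj_def doubleton_eq_iff)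
    then show False using is_cycle_two_neighbours[OF C True] by metis
  next
    case False
    have restrict: "adj E a b" if "adj (insert {u, v} E) a b" "a \<in> set xs" "b \<in> set xs" for a b
      using that False by (auto simp: adj_def doubleton_eq_iff)
    have "xs \<noteq> []" using C by (auto simp: is_cycle_def)
    then have "is_cycle E xs"
      using C restrict unfolding is_cycle_def by (simp add: Suc_lessD)
    then show False using ac by (auto simp: acyclic_graph_def)
  qed
qed

lemma connected_add_leaf:
  assumes conn: "connected_graph V E" and u: "u \<in> V"
  shows "connected_graph (insert v V) (insert {u, v} E)"
  unfolding connected_graph_def
proof (intro ballI)
  let ?R = "{(x, y). adj (insert {u, v} E) x y}"
  have old: "(a, b) \<in> ?R\<^sup>*" if "a \<in> V" "b \<in> V" for a b
  proof -
    have "(a, b) \<in> {(x, y). adj E x y}\<^sup>*" using conn that by (auto simp: connected_graph_def)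
    moreover have "{(x, y). adj E x y}\<^sup>* \<subseteq> ?R\<^sup>*" by (rule rtrancl_mono) (auto simp: adj_def)
    ultimately show ?thesis by blast
  qed
  have uv: "(u, v) \<in> ?R" and vu: "(v, u) \<in> ?R" by (auto simp: adj_def insert_commute)
  fix a b assume "a \<in> insert v V" "b \<in> insert v V"
  then consider "a \<in> V" "b \<in> V" | "a = v" "b \<in> V" | "a \<in> V" "b = v" | "a = v" "b = v" by blast
  then show "(a, b) \<in> ?R\<^sup>*"
  proof cases
    case 2 then show ?thesis using old[OF u] vu by (meson converse_rtrancl_into_rtrancl)
  next
    case 3 then show ?thesis using old[OF _ u] uv by (meson rtrancl_into_rtrancl)
  qed (use old in auto)
qed

lemma is_tree_singleton: "is_tree {a} {}"
  unfolding is_tree_def simple_graph_def connected_graph_def acyclic_graph_def is_cycle_def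
  by (auto simp: adj_def)

lemma is_tree_add_leaf:
  assumes T: "is_tree V E" and u: "u \<in> V" and v: "v \<notin> V"
  shows "is_tree (insert v V) (insert {u, v} E)"
proof -
  have "\<forall>e\<in>E. v \<notin> e" using is_tree_edge_subset[OF T] v by blast
  moreover have "u \<noteq> v" using u v by blast
  ultimately show ?thesis
    using T u acyclic_add_leaf connected_add_leaf
    by (auto simp: is_tree_def simple_graph_def)
qed

definition is_path :: "'a set set \<Rightarrow> 'a list \<Rightarrow> bool" where
  "is_path E xs \<longleftrightarrow> distinct xs \<and> (\<forall>i. Suc i < length xs \<longrightarrow> adj E (xs ! i) (xs ! Suc i))"

lemma is_path_snoc:
  assumes "is_path E xs" "xs \<noteq> []" "adj E (last xs) w" "w \<notin> set xs"
  shows "is_path E (xs @ [w])"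
  using assms unfolding is_path_def
  by (auto simp: nth_append last_conv_nth less_Suc_eq) (metis diff_Suc_1')

lemma is_path_drop_is_cycle:
  assumes "is_path E xs" "j + 3 \<le> length xs" "adj E (last xs) (xs ! j)"
  shows "is_cycle E (drop j xs)"
  using assms unfolding is_path_def is_cycle_def
  by (auto simp: hd_drop_conv_nth)

lemma longest_path_exists:
  assumes fin: "finite V" and ab: "{a, b} \<in> E" "a \<noteq> b" "a \<in> V" "b \<in> V"
  obtains xs where "set xs \<subseteq> V" "is_path E xs" "2 \<le> length xs"
    "\<And>ys. set ys \<subseteq> V \<Longrightarrow> is_path E ys \<Longrightarrow> length ys \<le> length xs"
proof -
  define P where "P = {xs. set xs \<subseteq> V \<and> is_path E xs}"
  have "finite P" unfolding P_def is_path_def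
    using finite_subset_distinct[OF fin] by (auto elim!: finite_subset[rotated])
  have "[a, b] \<in> P" using ab by (auto simp: P_def is_path_def adj_def less_Suc_eq)
  then have "Max (length ` P) \<in> length ` P" using \<open>finite P\<close> by (intro Max_in) auto
  then obtain xs where xs: "xs \<in> P" "length xs = Max (length ` P)" by auto
  have "length ys \<le> length xs" if "ys \<in> P" for ys
    using xs \<open>finite P\<close> that by simp
  moreover from this have "2 \<le> length xs" using \<open>[a, b] \<in> P\<close> by fastforce
  ultimately show thesis using that xs(1) by (auto simp: P_def)
qed

lemma acyclic_has_leaf:
  assumes sg: "simple_graph V E" and ac: "acyclic_graph E" and ne: "E \<noteq> {}"
  obtains z p where "p \<noteq> z" "{p, z} \<in> E" "\<forall>e\<in>E. z \<in> e \<longrightarrow> e = {p, z}"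
proof -
  have edge: "e \<subseteq> V \<and> card e = 2" if "e \<in> E" for e using sg that by (simp add: simple_graph_def)
  obtain a b where ab: "{a, b} \<in> E" "a \<noteq> b" using ne edge by (fastforce simp: card_2_iff)
  moreover have "a \<in> V" "b \<in> V" using edge[OF ab(1)] by auto
  moreover have "finite V" using sg by (simp add: simple_graph_def)
  ultimately obtain xs where xsV: "set xs \<subseteq> V" and path: "is_path E xs" and L: "2 \<le> length xs"
    and longest: "\<And>ys. set ys \<subseteq> V \<Longrightarrow> is_path E ys \<Longrightarrow> length ys \<le> length xs"
    using longest_path_exists by metis
  have ne_xs: "xs \<noteq> []" using L by auto
  define z where "z = last xs"
  define p where "p = xs ! (length xs - 2)"
  have z_nth: "z = xs ! (length xs - 1)" using ne_xs by (simp add: z_def last_conv_nth)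
  have "Suc (length xs - 2) = length xs - 1" "length xs - 1 < length xs" using L by auto
  then have "adj E p z" using path unfolding is_path_def p_def z_nth by metis
  moreover have "p \<noteq> z"
    using path L unfolding is_path_def p_def z_nth by (simp add: nth_eq_iff_index_eq)
  moreover have "e = {p, z}" if e: "e \<in> E" "z \<in> e" for e
  proof -
    obtain w where w: "e = {z, w}" "w \<noteq> z" using edge[OF e(1)] e(2) by (auto simp: card_2_iff)
    have zw: "adj E (last xs) w" using e w by (simp add: adj_def z_def)
    have "w \<in> set xs"
    proof (rule ccontr)
      assume "w \<notin> set xs"
      then have "length (xs @ [w]) \<le> length xs"
        using longest[OF _ is_path_snoc[OF path ne_xs zw]] xsV edge[OF e(1)] w by simp
      then show False by simp
    qed
    then obtain j where j: "j < length xs" "xs ! j = w" by (auto simp: in_set_conv_nth)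
    have "j \<noteq> length xs - 1" using j w z_nth by auto
    moreover have "\<not> j + 3 \<le> length xs"
    proof
      assume "j + 3 \<le> length xs"
      then have "is_cycle E (drop j xs)" using is_path_drop_is_cycle path zw j(2) by metis
      then show False using ac unfolding acyclic_graph_def by blast
    qed
    ultimately have "j = length xs - 2" using j by linarith
    then show ?thesis using w j by (simp add: p_def insert_commute)
  qed
  ultimately show thesis using that unfolding adj_def by blast
qed

lemma connected_remove_leaf:
  assumes conn: "connected_graph V E" and pz: "p \<noteq> z" and leaf: "\<forall>e\<in>E. z \<in> e \<longrightarrow> e = {p, z}"
  shows "connected_graph (V - {z}) (E - {{p, z}})"
proof -
  let ?R = "{(x, y). adj E x y}" and ?R' = "{(x, y). adj (E - {{p, z}}) x y}"
  have reach: "(c \<noteq> z \<longrightarrow> (a, c) \<in> ?R'\<^sup>*) \<and> (c = z \<longrightarrow> (a, p) \<in> ?R'\<^sup>*)"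
    if "(a, c) \<in> ?R\<^sup>*" "a \<noteq> z" for a c
    using that(1)
  proof (induction rule: rtrancl_induct)
    case base then show ?case using that(2) by simp
  next
    case (step c b)
    have cb: "{c, b} \<in> E" using step(2) by (simp add: adj_def)
    consider "c = z" | "c \<noteq> z" "b = z" | "c \<noteq> z" "b \<noteq> z" by blast
    then show ?case
    proof cases
      case 1
      then have "b = p" using leaf cb pz by (auto simp: doubleton_eq_iff)
      then show ?thesis using step(3) 1 pz by auto
    next
      case 2
      then have "c = p" using leaf cb by (auto simp: doubleton_eq_iff)
      then show ?thesis using step(3) 2 by auto
    next
      case 3
      then have "(c, b) \<in> ?R'" using cb by (auto simp: adj_def doubleton_eq_iff)
      then show ?thesis using step(3) 3 by (meson rtrancl_into_rtrancl)
    qed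
  qed
  show ?thesis
    unfolding connected_graph_def
  proof (intro ballI)
    fix a b assume "a \<in> V - {z}" "b \<in> V - {z}"
    then show "(a, b) \<in> ?R'\<^sup>*" using reach conn by (auto simp: connected_graph_def)
  qed
qed

lemma is_tree_vertex_in_edge:
  assumes T: "is_tree V E" and V: "2 \<le> card V" and v: "v \<in> V"
  obtains e where "e \<in> E" "v \<in> e"
proof -
  have "card (V - {v}) \<noteq> 0" using V v by (simp add: card_Diff_singleton_if)
  then have "V - {v} \<noteq> {}" by (metis card.empty)
  then obtain w where w: "w \<in> V" "w \<noteq> v" by blast
  have "(v, w) \<in> {(x, y). adj E x y}\<^sup>*" using T v w by (auto simp: is_tree_def connected_graph_def)
  then obtain y where "adj E v y" using w(2) by (cases rule: converse_rtranclE) auto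
  then show thesis using that by (auto simp: adj_def)
qed

lemma is_tree_degree_pos:
  assumes "is_tree V E" "2 \<le> card V" "v \<in> V"
  shows "1 \<le> degree E v"
proof -
  obtain e where "e \<in> E" "v \<in> e" using is_tree_vertex_in_edge[OF assms] .
  then have "{e \<in> E. v \<in> e} \<noteq> {}" by auto
  then show ?thesis
    using is_tree_finite_edges[OF assms(1)] by (simp add: degree_def Suc_le_eq card_gt_0_iff)
qed

lemma is_tree_remove_leaf:
  assumes T: "is_tree V E" and V: "2 \<le> card V"
  obtains z p E' where "z \<in> V" "p \<in> V - {z}" "E = insert {p, z} E'" "{p, z} \<notin> E'"
    "is_tree (V - {z}) E'"
proof -
  have sg: "simple_graph V E" and conn: "connected_graph V E" and ac: "acyclic_graph E"
    using T by (auto simp: is_tree_def)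
  obtain v where "v \<in> V" using V by fastforce
  then have "E \<noteq> {}" using is_tree_vertex_in_edge[OF T V] by blast
  then obtain z p where pz: "p \<noteq> z" "{p, z} \<in> E" and leaf: "\<forall>e\<in>E. z \<in> e \<longrightarrow> e = {p, z}"
    using acyclic_has_leaf[OF sg ac] by blast
  define E' where "E' = E - {{p, z}}"
  have "z \<in> V" "p \<in> V" using is_tree_edge_subset[OF T pz(2)] by auto
  moreover have "simple_graph (V - {z}) E'"
    using sg leaf by (auto simp: simple_graph_def E'_def)
  moreover have "acyclic_graph E'"
    using ac is_cycle_mono[of E' _ E] by (auto simp: acyclic_graph_def E'_def)
  moreover have "connected_graph (V - {z}) E'"
    unfolding E'_def using connected_remove_leaf[OF conn pz(1) leaf] .
  ultimately have "is_tree (V - {z}) E'" using pz(1) by (auto simp: is_tree_def)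
  moreover have "E = insert {p, z} E'" "{p, z} \<notin> E'" using pz(2) by (auto simp: E'_def)
  ultimately show thesis using that pz(1) \<open>z \<in> V\<close> \<open>p \<in> V\<close> by blast
qed

lemma is_tree_degree_sum: "is_tree V E \<Longrightarrow> sum (degree E) V + 2 = 2 * card V"
proof (induction "card V" arbitrary: V E rule: less_induct)
  case less
  have fin: "finite V" and ne: "V \<noteq> {}" using less.prems by (auto simp: is_tree_def simple_graph_def)
  show ?case
  proof (cases "2 \<le> card V")
    case False
    moreover have "card V \<noteq> 0" using fin ne by simp
    ultimately have "card V = 1" by linarith
    then obtain a where a: "V = {a}" by (rule card_1_singletonE)
    have "E = {}"
    proof (rule ccontr)
      assume "E \<noteq> {}"
      then obtain e where "e \<subseteq> {a}" "card e = 2"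
        using less.prems a by (auto simp: is_tree_def simple_graph_def)
      then show False using card_mono[of "{a}" e] by simp
    qed
    then show ?thesis using a by (simp add: degree_def)
  next
    case True
    then obtain z p E' where z: "z \<in> V" and p: "p \<in> V - {z}"
      and E: "E = insert {p, z} E'" "{p, z} \<notin> E'" and T': "is_tree (V - {z}) E'"
      by (rule is_tree_remove_leaf[OF less.prems])
    have IH: "sum (degree E') (V - {z}) + 2 = 2 * card (V - {z})"
      using less.hyps[OF _ T'] fin z by (meson card_Diff1_less)
    have "sum (degree E) V = sum (\<lambda>v. degree E' v + (if v \<in> {p, z} then 1 else 0)) V"
      using degree_insert_edge[OF is_tree_finite_edges[OF T'] E(2)] E(1) by simp
    also have "\<dots> = sum (degree E') V + card (V \<inter> {p, z})"
      using fin by (simp add: sum.distrib sum.If_cases del: insert_iff)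
    also have "V \<inter> {p, z} = {p, z}" using z p by auto
    also have "sum (degree E') V = sum (degree E') (V - {z})"
      using fin z is_tree_degree_outside[OF T'] by (simp add: sum.remove)
    finally show ?thesis using IH fin z p True by (simp add: card_Diff_singleton)
  qed
qed

lemma min_vertex_cover_if_matched:
  assumes cover: "vertex_cover V E X" and fin: "finite V"
    and inj: "inj_on f X" and match: "\<forall>x\<in>X. f x \<notin> X \<and> {x, f x} \<in> E"
  shows "min_vertex_cover V E X"
proof -
  have "card X \<le> card Y" if Y: "vertex_cover V E Y" for Y
  proof -
    have "finite Y" using Y fin finite_subset by (auto simp: vertex_cover_def)
    define g where "g x = (if x \<in> Y then x else f x)" for x
    have "g ` X \<subseteq> Y"
      using Y match by (fastforce simp: vertex_cover_def g_def)
    moreover have "inj_on g X"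
      using inj match unfolding inj_on_def g_def by metis
    ultimately show ?thesis using card_inj_on_le \<open>finite Y\<close> by blast
  qed
  then show ?thesis using cover by (simp add: min_vertex_cover_def)
qed

definition matched_cover_tree :: "'a set \<Rightarrow> 'a set \<Rightarrow> ('a \<Rightarrow> nat) \<Rightarrow> 'a set set \<Rightarrow> ('a \<Rightarrow> 'a) \<Rightarrow> bool" where
  "matched_cover_tree V X d E f \<longleftrightarrow> is_tree V E \<and> (\<forall>v\<in>V. degree E v = d v) \<and> vertex_cover V E X
     \<and> inj_on f X \<and> (\<forall>x\<in>X. f x \<in> V - X \<and> {x, f x} \<in> E)"

definition has_matched_cover_tree :: "'a set \<Rightarrow> 'a set \<Rightarrow> ('a \<Rightarrow> nat) \<Rightarrow> bool" where
  "has_matched_cover_tree V X d \<longleftrightarrow> (\<exists>E f. matched_cover_tree V X d E f)"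

lemma matched_cover_tree_min_vertex_cover:
  "matched_cover_tree V X d E f \<Longrightarrow> min_vertex_cover V E X"
  by (intro min_vertex_cover_if_matched)
    (auto simp: matched_cover_tree_def is_tree_def simple_graph_def)

lemma has_matched_cover_tree_edge:
  assumes "x \<noteq> z" "d x = 1" "d z = 1"
  shows "has_matched_cover_tree {x, z} {x} d"
proof -
  have "is_tree {x, z} {{x, z}}"
    using is_tree_add_leaf[OF is_tree_singleton[of x], of x z] assms(1) by (simp add: insert_commute)
  moreover have "degree {{x, z}} v = 1" if "v \<in> {x, z}" for v
  proof -
    have "{e \<in> {{x, z}}. v \<in> e} = {{x, z}}" using that by auto
    then show ?thesis by (simp add: degree_def)
  qed
  ultimately have "matched_cover_tree {x, z} {x} d {{x, z}} (\<lambda>_. z)"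
    using assms by (auto simp: matched_cover_tree_def vertex_cover_def)
  then show ?thesis by (auto simp: has_matched_cover_tree_def)
qed

lemma has_matched_cover_tree_add_leaf:
  assumes H: "has_matched_cover_tree (V - {y}) X (d(x := d x - 1))"
    and x: "x \<in> X" and y: "y \<in> V - X" and dy: "d y = 1" and dx: "1 \<le> d x"
  shows "has_matched_cover_tree V X d"
proof -
  obtain E f where M: "matched_cover_tree (V - {y}) X (d(x := d x - 1)) E f"
    using H by (auto simp: has_matched_cover_tree_def)
  then have T: "is_tree (V - {y}) E" and XV: "X \<subseteq> V - {y}"
    by (auto simp: matched_cover_tree_def vertex_cover_def)
  have xV: "x \<in> V - {y}" using x XV by blast
  have new: "{x, y} \<notin> E" using is_tree_edge_subset[OF T] by blast
  have "is_tree V (insert {x, y} E)"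
    using is_tree_add_leaf[OF T xV, of y] y by (simp add: insert_absorb)
  moreover have "degree (insert {x, y} E) v = d v" if "v \<in> V" for v
    using M that xV dx dy is_tree_degree_outside[OF T, of y]
    by (auto simp: degree_insert_edge[OF is_tree_finite_edges[OF T] new] matched_cover_tree_def)
  ultimately have "matched_cover_tree V X d (insert {x, y} E) f"
    using M x by (auto simp: matched_cover_tree_def vertex_cover_def)
  then show ?thesis by (auto simp: has_matched_cover_tree_def)
qed

lemma has_matched_cover_tree_add_pendant_path:
  assumes H: "has_matched_cover_tree (V - {x, y}) (X - {x}) (d(w := d w - 1))"
    and x: "x \<in> V \<inter> X" and y: "y \<in> V - X" and w: "w \<in> V" "w \<noteq> x" "w \<noteq> y"
    and dx: "d x = 2" and dy: "d y = 1" and dw: "1 \<le> d w"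
  shows "has_matched_cover_tree V X d"
proof -
  obtain E f where M: "matched_cover_tree (V - {x, y}) (X - {x}) (d(w := d w - 1)) E f"
    using H by (auto simp: has_matched_cover_tree_def)
  then have T: "is_tree (V - {x, y}) E" by (simp add: matched_cover_tree_def)
  have wV: "w \<in> V - {x, y}" using w by blast
  have xy: "x \<noteq> y" using x y by blast
  let ?E1 = "insert {w, x} E" and ?E2 = "insert {x, y} (insert {w, x} E)"
  have T1: "is_tree (insert x (V - {x, y})) ?E1" using is_tree_add_leaf[OF T wV, of x] by blast
  have "insert y (insert x (V - {x, y})) = V" using x y by blast
  then have "is_tree V ?E2" using is_tree_add_leaf[OF T1, of x y] xy by simp
  moreover have new1: "{w, x} \<notin> E" and new2: "{x, y} \<notin> ?E1"
    using is_tree_edge_subset[OF T] is_tree_edge_subset[OF T1] xy by blast+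
  have "degree ?E2 v = d v" if "v \<in> V" for v
    using M that w xy dx dy dw is_tree_degree_outside[OF T, of x] is_tree_degree_outside[OF T, of y]
      degree_insert_edge[OF is_tree_finite_edges[OF T] new1]
      degree_insert_edge[OF is_tree_finite_edges[OF T1] new2]
    by (auto simp: matched_cover_tree_def)
  moreover have "inj_on (f(x := y)) X"
    using M y by (auto simp: matched_cover_tree_def inj_on_def)
  ultimately have "matched_cover_tree V X d ?E2 (f(x := y))"
    using M x y by (auto simp: matched_cover_tree_def vertex_cover_def)
  then show ?thesis by (auto simp: has_matched_cover_tree_def)
qed

lemma sum_fun_upd_decrement:
  fixes f :: "'a \<Rightarrow> nat"
  assumes "finite A" "a \<in> A \<Longrightarrow> 1 \<le> f a"
  shows "sum (f(a := f a - 1)) A + (if a \<in> A then 1 else 0) = sum f A"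
proof (cases "a \<in> A")
  case True
  have "sum (f(a := f a - 1)) (A - {a}) = sum f (A - {a})" by (rule sum.cong) auto
  then show ?thesis using assms True by (simp add: sum.remove)
next
  case False
  then have "sum (f(a := f a - 1)) A = sum f A" by (intro sum.cong) auto
  then show ?thesis using False by simp
qed

text \<open>The hypotheses of the theorem in a form preserved by both reductions: the degree sum
  2 card V - 2 replaces being a tree degree sequence, and a vertex of X may have degree 1 only when
  the tree is a single edge, the base case of the induction.\<close>

definition admissible :: "'a set \<Rightarrow> 'a set \<Rightarrow> ('a \<Rightarrow> nat) \<Rightarrow> bool" where
  "admissible V X d \<longleftrightarrow> finite V \<and> X \<subseteq> V \<and> (\<forall>v\<in>V. 1 \<le> d v) \<and> (\<forall>x\<in>X. 2 \<le> d x \<or> card V = 2)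
     \<and> card X \<le> card (V - X) \<and> sum d (V - X) \<le> sum d X \<and> sum d V + 2 = 2 * card V"

lemma admissible_counts:
  assumes "admissible V X d"
  shows "card V = card X + card (V - X)" "sum d V = sum d X + sum d (V - X)"
    and "card (V - X) \<le> sum d (V - X)" "card X \<le> sum d X"
proof -
  have fin: "finite V" and XV: "X \<subseteq> V" and d1: "\<forall>v\<in>V. 1 \<le> d v"
    using assms by (auto simp: admissible_def)
  show "card V = card X + card (V - X)"
    using card_Diff_subset[OF finite_subset[OF XV fin] XV] card_mono[OF fin XV] by simp
  show "sum d V = sum d X + sum d (V - X)" using sum.subset_diff[OF XV fin, of d] by simp
  show "card (V - X) \<le> sum d (V - X)" "card X \<le> sum d X"
    using sum_bounded_below[of "V - X" 1 d] sum_bounded_below[of X 1 d] d1 XV by auto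
qed

lemma admissible_card_ge_2: "admissible V X d \<Longrightarrow> 2 \<le> card V"
  using admissible_counts[of V X d] unfolding admissible_def by linarith

lemma has_matched_cover_tree_if_card_2:
  assumes adm: "admissible V X d" and n2: "card V = 2"
  shows "has_matched_cover_tree V X d"
proof -
  note counts = admissible_counts[OF adm]
  have kc: "card X \<le> card (V - X)" and sc: "sum d (V - X) \<le> sum d X" and fin: "finite V"
    and XV: "X \<subseteq> V" and tot: "sum d V + 2 = 2 * card V" and d1: "\<forall>v\<in>V. 1 \<le> d v"
    using adm by (auto simp: admissible_def)
  have "finite X" using finite_subset[OF XV fin] .
  have "card X \<noteq> 0"
  proof
    assume "card X = 0"
    then have "sum d X = 0" using \<open>finite X\<close> by simp
    then show False using counts(2) sc tot n2 by linarith
  qed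
  then have "card X = 1" "card (V - X) = 1" using counts(1) kc n2 by linarith+
  then obtain x z where X: "X = {x}" and Y: "V - X = {z}" by (meson card_1_singletonE)
  have xz: "x \<noteq> z" using X Y by blast
  have V: "V = {x, z}" using X Y XV by blast
  then have "d x + d z = 2" using tot n2 xz by simp
  moreover have "1 \<le> d x" "1 \<le> d z" using d1 V by simp_all
  ultimately have "d x = 1" "d z = 1" by linarith+
  then show ?thesis using has_matched_cover_tree_edge[OF xz] V X by simp
qed

lemma admissible_leaf_outside:
  assumes adm: "admissible V X d" and n3: "3 \<le> card V"
  obtains y where "y \<in> V - X" "d y = 1"
proof -
  have d1: "\<forall>v\<in>V. 1 \<le> d v" and dX: "\<forall>x\<in>X. 2 \<le> d x \<or> card V = 2"
    and tot: "sum d V + 2 = 2 * card V" using adm by (simp_all add: admissible_def)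
  have "\<exists>y\<in>V - X. d y = 1"
  proof (rule ccontr)
    assume none: "\<not> (\<exists>y\<in>V - X. d y = 1)"
    have "2 \<le> d y" if "y \<in> V - X" for y
    proof -
      have "1 \<le> d y" "d y \<noteq> 1" using d1 none that by auto
      then show ?thesis by linarith
    qed
    then have "card (V - X) * 2 \<le> sum d (V - X)"
      using sum_bounded_below[of "V - X" 2 d] by simp
    moreover have "card X * 2 \<le> sum d X"
      using sum_bounded_below[of X 2 d] dX n3 by simp
    ultimately show False using admissible_counts(1,2)[OF adm] tot by linarith
  qed
  then show thesis using that by blast
qed

lemma admissible_remove_leaf:
  assumes adm: "admissible V X d" and n3: "3 \<le> card V"
    and y: "y \<in> V - X" "d y = 1" and x: "x \<in> X"
    and dx: "3 \<le> d x \<or> card V = 3" and more_outside: "card X < card (V - X)"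
  shows "admissible (V - {y}) X (d(x := d x - 1))"
proof -
  have fin: "finite V" and XV: "X \<subseteq> V" and d1: "\<forall>v\<in>V. 1 \<le> d v"
    and dX: "\<forall>x\<in>X. 2 \<le> d x \<or> card V = 2" and sc: "sum d (V - X) \<le> sum d X"
    and tot: "sum d V + 2 = 2 * card V" using adm by (simp_all add: admissible_def)
  let ?d = "d(x := d x - 1)"
  have x2: "2 \<le> d x" using dX x n3 by auto
  have xV: "x \<in> V - {y}" using x XV y by blast
  have card': "card (V - {y}) = card V - 1" and card_out: "card (V - X - {y}) = card (V - X) - 1"
    using fin y by simp_all
  have "V - {y} - X = V - X - {y}" by blast
  moreover have "sum ?d (V - X - {y}) + 1 = sum d (V - X)"
    using sum_fun_upd_decrement[of "V - X - {y}" x d] sum.remove[of "V - X" y d] fin y x by simp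
  moreover have "sum ?d X + 1 = sum d X"
    using sum_fun_upd_decrement[of X x d] finite_subset[OF XV fin] x x2 by simp
  moreover have "sum ?d (V - {y}) + 2 = sum d V"
    using sum_fun_upd_decrement[of "V - {y}" x d] sum.remove[of V y d] fin xV x2 y by simp
  ultimately show ?thesis
    using fin XV d1 dX x2 dx more_outside sc tot card' card_out y n3
    unfolding admissible_def by (auto split: if_splits)
qed

lemma admissible_remove_pendant_path:
  assumes adm: "admissible V X d" and n3: "3 \<le> card V"
    and y: "y \<in> V - X" "d y = 1" and x: "x \<in> X" "d x = 2"
    and w: "w \<in> V" "w \<noteq> x" "w \<noteq> y" "2 \<le> d w"
    and wX: "w \<in> X \<Longrightarrow> (3 \<le> d w \<or> card V = 4) \<and> sum d (V - X) + 2 \<le> sum d X"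
  shows "admissible (V - {x, y}) (X - {x}) (d(w := d w - 1))"
proof -
  have fin: "finite V" and XV: "X \<subseteq> V" and d1: "\<forall>v\<in>V. 1 \<le> d v"
    and dX: "\<forall>x\<in>X. 2 \<le> d x \<or> card V = 2" and kc: "card X \<le> card (V - X)"
    and sc: "sum d (V - X) \<le> sum d X" and tot: "sum d V + 2 = 2 * card V"
    using adm by (simp_all add: admissible_def)
  let ?d = "d(w := d w - 1)"
  have finX: "finite X" using finite_subset[OF XV fin] .
  have xy: "x \<noteq> y" and xV: "x \<in> V" using x y XV by auto
  have outside: "V - {x, y} - (X - {x}) = V - X - {y}" using x by blast
  have card': "card (V - {x, y}) = card V - 2"
    using fin xy xV y by (simp add: card_Diff_subset)
  have card_in: "card (X - {x}) = card X - 1" and card_out: "card (V - X - {y}) = card (V - X) - 1"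
    using fin finX x y by simp_all
  have sX: "sum d X = sum d (X - {x}) + 2" using sum.remove[OF finX x(1), of d] x by simp
  have sY: "sum d (V - X) = sum d (V - X - {y}) + 1" using sum.remove[of "V - X" y d] fin y by simp
  have sV: "sum d V = sum d (V - {x, y}) + 3"
    using sum.subset_diff[of "{x, y}" V d] fin xV y xy x by auto
  have sV': "sum ?d (V - {x, y}) + 1 = sum d (V - {x, y})"
    using sum_fun_upd_decrement[of "V - {x, y}" w d] fin w by simp
  have sX': "sum ?d (X - {x}) + (if w \<in> X then 1 else 0) = sum d (X - {x})"
    using sum_fun_upd_decrement[of "X - {x}" w d] finX w by simp
  have sY': "sum ?d (V - X - {y}) + (if w \<in> X then 0 else 1) = sum d (V - X - {y})"
    using sum_fun_upd_decrement[of "V - X - {y}" w d] fin w by (simp split: if_splits)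
  have "sum ?d (V - X - {y}) \<le> sum ?d (X - {x})"
    using sX sY sX' sY' sc wX by (cases "w \<in> X") simp_all
  then show ?thesis
    unfolding admissible_def outside
    using fin XV d1 dX w wX kc card' card_in card_out sV sV' tot n3 x y
    by (auto split: if_splits)
qed

lemma admissible_outside_leaves:
  assumes adm: "admissible V X d" and n4: "4 \<le> card V"
    and x: "x \<in> X" "d x = 2" and leaves: "\<forall>v\<in>V - X. d v = 1"
  obtains w where "w \<in> X" "w \<noteq> x" "3 \<le> d w \<or> card V = 4" "sum d (V - X) + 2 \<le> sum d X"
proof -
  have fin: "finite V" and XV: "X \<subseteq> V" and kc: "card X \<le> card (V - X)"
    and dX: "\<forall>x\<in>X. 2 \<le> d x \<or> card V = 2" and tot: "sum d V + 2 = 2 * card V"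
    using adm by (simp_all add: admissible_def)
  note counts = admissible_counts(1,2)[OF adm]
  have finX: "finite X" using finite_subset[OF XV fin] .
  have SY: "sum d (V - X) = card (V - X)"
    using sum.cong[OF refl, of "V - X" d "\<lambda>_. 1"] leaves by simp
  have "card X \<noteq> 1"
  proof
    assume "card X = 1"
    then obtain a where "X = {a}" by (rule card_1_singletonE)
    then have "X = {x}" using x(1) by simp
    then show False using counts SY tot n4 x(2) by simp
  qed
  moreover have "card X \<noteq> 0" using finX x(1) by auto
  ultimately have k2: "2 \<le> card X" by linarith
  then have gap: "sum d (V - X) + 2 \<le> sum d X" using counts SY tot by linarith
  have "card (X - {x}) \<noteq> 0" using k2 finX x(1) by simp
  then obtain w0 where w0: "w0 \<in> X" "w0 \<noteq> x" by (metis card.empty ex_in_conv DiffE singletonI)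
  show thesis
  proof (cases "\<exists>w\<in>X - {x}. 3 \<le> d w")
    case True
    then show thesis using that gap by blast
  next
    case False
    have "d w = 2" if "w \<in> X" for w
    proof (cases "w = x")
      case False
      then have "2 \<le> d w" "\<not> 3 \<le> d w" using dX n4 that \<open>\<not> (\<exists>w\<in>X - {x}. 3 \<le> d w)\<close> by auto
      then show ?thesis by linarith
    qed (use x in simp)
    then have "sum d X = 2 * card X" using sum.cong[OF refl, of X d "\<lambda>_. 2"] by simp
    then have "card V = 4" using counts SY tot kc k2 by linarith
    then show thesis using that w0 gap by blast
  qed
qed

lemma admissible_more_outside_if_high_degrees:
  assumes adm: "admissible V X d" and high: "\<forall>x\<in>X. 3 \<le> d x"
  shows "card X < card (V - X)"
proof -
  have "card X * 3 \<le> sum d X" using sum_bounded_below[of X 3 d] high by simp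
  then show ?thesis using admissible_counts(1,2,3)[OF adm] adm unfolding admissible_def by linarith
qed

lemma admissible_pendant_path:
  assumes adm: "admissible V X d" and n4: "4 \<le> card V"
    and y: "y \<in> V - X" "d y = 1" and x: "x \<in> X" "d x = 2"
  obtains w where "w \<in> V" "w \<noteq> x" "w \<noteq> y" "2 \<le> d w"
    "w \<in> X \<Longrightarrow> (3 \<le> d w \<or> card V = 4) \<and> sum d (V - X) + 2 \<le> sum d X"
proof (cases "\<exists>w\<in>V - X. 2 \<le> d w")
  case True
  then obtain w where w: "w \<in> V - X" "2 \<le> d w" by blast
  then have "w \<noteq> x" "w \<noteq> y" using x y by auto
  then show thesis using that w by blast
next
  case False
  have XV: "X \<subseteq> V" and d1: "\<forall>v\<in>V. 1 \<le> d v" and dX: "\<forall>x\<in>X. 2 \<le> d x \<or> card V = 2"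
    using adm by (simp_all add: admissible_def)
  have leaves: "\<forall>v\<in>V - X. d v = 1"
  proof
    fix v assume "v \<in> V - X"
    then have "1 \<le> d v" "\<not> 2 \<le> d v" using d1 False by auto
    then show "d v = 1" by linarith
  qed
  obtain w where "w \<in> X" "w \<noteq> x" "3 \<le> d w \<or> card V = 4" "sum d (V - X) + 2 \<le> sum d X"
    using admissible_outside_leaves[OF adm n4 x leaves] by blast
  moreover have "w \<in> V" "w \<noteq> y" "2 \<le> d w" using XV dX y n4 calculation(1) by auto
  ultimately show thesis using that by blast
qed

lemma admissible_reduction_cases:
  assumes adm: "admissible V X d" and n3: "3 \<le> card V" and y: "y \<in> V - X" "d y = 1"
  obtains (leaf) x where "x \<in> X" "3 \<le> d x \<or> card V = 3" "card X < card (V - X)"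
    | (path) x w where "x \<in> X" "d x = 2" "w \<in> V" "w \<noteq> x" "w \<noteq> y" "2 \<le> d w"
        "w \<in> X \<Longrightarrow> (3 \<le> d w \<or> card V = 4) \<and> sum d (V - X) + 2 \<le> sum d X"
proof (cases "\<exists>x\<in>X. (3 \<le> d x \<or> card V = 3) \<and> card X < card (V - X)")
  case True
  then show thesis using leaf by blast
next
  case no_leaf: False
  have kc: "card X \<le> card (V - X)" and dX: "\<forall>x\<in>X. 2 \<le> d x \<or> card V = 2"
    and sc: "sum d (V - X) \<le> sum d X" and tot: "sum d V + 2 = 2 * card V"
    using adm by (simp_all add: admissible_def)
  note counts = admissible_counts[OF adm]
  have "sum d X \<noteq> 0" using counts(1,2,3) sc tot n3 by linarith
  then obtain x0 where x0: "x0 \<in> X" by (metis empty_iff equals0I sum.empty)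
  have n4: "4 \<le> card V"
  proof (rule ccontr)
    assume "\<not> 4 \<le> card V"
    then have "card V = 3" using n3 by linarith
    moreover have "card X < card (V - X)" using calculation counts(1) kc by presburger
    ultimately show False using no_leaf x0 by blast
  qed
  have "\<exists>x\<in>X. d x = 2"
  proof (rule ccontr)
    assume none: "\<not> (\<exists>x\<in>X. d x = 2)"
    have high: "\<forall>x\<in>X. 3 \<le> d x"
    proof
      fix x assume "x \<in> X"
      then have "2 \<le> d x" "d x \<noteq> 2" using dX n4 none by auto
      then show "3 \<le> d x" by linarith
    qed
    then show False
      using no_leaf x0 admissible_more_outside_if_high_degrees[OF adm high] by blast
  qed
  then obtain x where x: "x \<in> X" "d x = 2" by blast
  then show thesis using admissible_pendant_path[OF adm n4 y x] path by metis
qed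

lemma admissible_has_matched_cover_tree: "admissible V X d \<Longrightarrow> has_matched_cover_tree V X d"
proof (induction "card V" arbitrary: V X d rule: less_induct)
  case less
  have fin: "finite V" and XV: "X \<subseteq> V" using less.prems by (simp_all add: admissible_def)
  show ?case
  proof (cases "card V = 2")
    case True
    then show ?thesis using has_matched_cover_tree_if_card_2 less.prems by blast
  next
    case False
    then have n3: "3 \<le> card V" using admissible_card_ge_2[OF less.prems] by linarith
    obtain y where y: "y \<in> V - X" "d y = 1" using admissible_leaf_outside[OF less.prems n3] .
    show ?thesis
    proof (rule admissible_reduction_cases[OF less.prems n3 y])
      fix x assume leaf: "x \<in> X" "3 \<le> d x \<or> card V = 3" "card X < card (V - X)"
      have "card (V - {y}) < card V" using fin y n3 by simp
      then have "has_matched_cover_tree (V - {y}) X (d(x := d x - 1))"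
        using less.hyps[OF _ admissible_remove_leaf[OF less.prems n3 y leaf]] by blast
      moreover have "1 \<le> d x" using less.prems leaf(1) by (auto simp: admissible_def)
      ultimately show ?thesis using has_matched_cover_tree_add_leaf[of V y X d x] leaf(1) y by blast
    next
      fix x w assume path: "x \<in> X" "d x = 2" "w \<in> V" "w \<noteq> x" "w \<noteq> y" "2 \<le> d w"
        "w \<in> X \<Longrightarrow> (3 \<le> d w \<or> card V = 4) \<and> sum d (V - X) + 2 \<le> sum d X"
      have "x \<in> V" using path(1) XV by blast
      then have "card (V - {x, y}) < card V" using fin y by (intro psubset_card_mono) auto
      then have "has_matched_cover_tree (V - {x, y}) (X - {x}) (d(w := d w - 1))"
        using less.hyps[OF _ admissible_remove_pendant_path[OF less.prems n3 y path]] by blast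
      then show ?thesis
        by (rule has_matched_cover_tree_add_pendant_path) (use \<open>x \<in> V\<close> path y in auto)
    qed
  qed
qed

lemma admissible_if_tree_degrees:
  assumes T: "is_tree V E" and deg: "\<forall>v\<in>V. degree E v = d v" and n3: "3 \<le> card V"
    and XV: "X \<subseteq> V" and dX: "\<forall>x\<in>X. 1 < d x" and half: "2 * card X \<le> card V"
    and sums: "sum d (V - X) \<le> sum d X"
  shows "admissible V X d"
proof -
  have fin: "finite V" using T by (simp add: is_tree_def simple_graph_def)
  have "\<forall>v\<in>V. 1 \<le> d v" using is_tree_degree_pos[OF T] deg n3 by fastforce
  moreover have "card X \<le> card (V - X)"
    using card_Diff_subset[OF finite_subset[OF XV fin] XV] half by simp
  moreover have "sum d V + 2 = 2 * card V"
    using is_tree_degree_sum[OF T] sum.cong[OF refl, of V "degree E" d] deg by simp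
  ultimately show ?thesis using fin XV dX sums by (auto simp: admissible_def)
qed

theorem lemma2:
  fixes n :: nat and d :: "nat \<Rightarrow> nat" and X :: "nat set"
  assumes "tree_degree_seq n d"
    and "n \<ge> 3"
    and "X \<subseteq> {1..n}"
    and "\<forall>i\<in>X. d i > 1"
    and "2 * card X \<le> n"
    and "(\<Sum>i\<in>X. d i) \<ge> (\<Sum>i\<in>{1..n} - X. d i)"
  shows "\<exists>E. is_tree {1..n} E \<and> (\<forall>i\<in>{1..n}. degree E i = d i) \<and> min_vertex_cover {1..n} E X"
proof -
  obtain E0 where "is_tree {1..n} E0" "\<forall>i\<in>{1..n}. degree E0 i = d i"
    using assms(1) by (auto simp: tree_degree_seq_def)
  then have "admissible {1..n} X d"
    using admissible_if_tree_degrees[of "{1..n}" E0 d X] assms(2-6) by simp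
  then have "has_matched_cover_tree {1..n} X d" by (rule admissible_has_matched_cover_tree)
  then obtain E f where "matched_cover_tree {1..n} X d E f"
    unfolding has_matched_cover_tree_def by blast
  then show ?thesis
    using matched_cover_tree_min_vertex_cover unfolding matched_cover_tree_def by blast
qed

end
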